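(* Let $m\geq 13$ and $n\geq 13$ be integers with $m\equiv 2 \pmod 3$ and $n\equiv 2\pmod 3$. Then $\gamma_{sR}(C_m\vee C_n)=2$.
   Context: $C_n$ denotes the cycle on $n$ vertices. For a graph $G=(V,E)$ and $x\in V$, $N_G[x]=\{x\}\cup\{y: xy\in E\}$. A signed Roman dominating function (SRDF) on $G$ is a function $f:V\to\{-1,1,2\}$ such that (a) $\sum_{y\in N_G[x]}f(y)\geq 1$ for every $x\in V$, and (b) every vertex $x$ with $f(x)=-1$ is adjacent to at least one vertex $y$ with $f(y)=2$. The weight of $f$ is $\sum_{x\in V}f(x)$, and $\gamma_{sR}(G)$ is the minimum weight of an SRDF on $G$. The join $G_1\vee G_2$ of two graphs has vertex set $V(G_1)\cup V(G_2)$ (disjoint union) and edge set $E(G_1)\cup E(G_2)\cup\{uv: u\in V(G_1), v\in V(G_2)\}$. *)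

theory Defs
  imports Main
begin

text \<open>A (simple) graph is given by a vertex set V and a symmetric, irreflexive
adjacency relation E.\<close>

definition closed_nbhd :: "'a set \<Rightarrow> ('a \<Rightarrow> 'a \<Rightarrow> bool) \<Rightarrow> 'a \<Rightarrow> 'a set" where
  "closed_nbhd V E x = {x} \<union> {y \<in> V. E x y}"

definition is_SRDF :: "'a set \<Rightarrow> ('a \<Rightarrow> 'a \<Rightarrow> bool) \<Rightarrow> ('a \<Rightarrow> int) \<Rightarrow> bool" where
  "is_SRDF V E f \<longleftrightarrow>
     (\<forall>x\<in>V. f x \<in> {-1, 1, 2}) \<and>
     (\<forall>x\<in>V. (\<Sum>y\<in>closed_nbhd V E x. f y) \<ge> 1) \<and>
     (\<forall>x\<in>V. f x = -1 \<longrightarrow> (\<exists>y\<in>V. E x y \<and> f y = 2))"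

definition weight :: "'a set \<Rightarrow> ('a \<Rightarrow> int) \<Rightarrow> int" where
  "weight V f = (\<Sum>x\<in>V. f x)"

text \<open>Signed Roman domination number: minimum weight of an SRDF
(the set of weights is finite and nonempty for finite V).\<close>
definition gamma_sR :: "'a set \<Rightarrow> ('a \<Rightarrow> 'a \<Rightarrow> bool) \<Rightarrow> int" where
  "gamma_sR V E = Min {weight V f | f. is_SRDF V E f}"

text \<open>The cycle C_n on vertex set {0..<n} (n \<ge> 3).\<close>
definition cycle_adj :: "nat \<Rightarrow> nat \<Rightarrow> nat \<Rightarrow> bool" where
  "cycle_adj n i j \<longleftrightarrow> i < n \<and> j < n \<and> (j = (i + 1) mod n \<or> i = (j + 1) mod n)"

definition join_verts :: "'a set \<Rightarrow> 'b set \<Rightarrow> ('a + 'b) set" where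
  "join_verts V1 V2 = V1 <+> V2"

fun join_adj :: "('a \<Rightarrow> 'a \<Rightarrow> bool) \<Rightarrow> ('b \<Rightarrow> 'b \<Rightarrow> bool) \<Rightarrow> ('a + 'b) \<Rightarrow> ('a + 'b) \<Rightarrow> bool" where
  "join_adj E1 E2 (Inl u) (Inl v) = E1 u v"
| "join_adj E1 E2 (Inr u) (Inr v) = E2 u v"
| "join_adj E1 E2 (Inl u) (Inr v) = True"
| "join_adj E1 E2 (Inr u) (Inl v) = True"

end

theory Submission
  imports Defs
begin

text \<open>Write \<open>a\<close> and \<open>b\<close> for the weights of an SRDF on the \<open>C\<^sub>m\<close> and \<open>C\<^sub>n\<close> sides of the
join. Every closed neighbourhood of a vertex of \<open>C\<^sub>m\<close> is a window of three consecutive cycle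
vertices together with all of \<open>C\<^sub>n\<close>, and every cycle vertex lies in exactly three windows; summing
the neighbourhood condition over \<open>C\<^sub>m\<close> therefore gives \<open>3a + m b \<ge> m\<close>, and symmetrically
\<open>3b + n a \<ge> n\<close>. For \<open>m, n \<ge> 4\<close> these force \<open>a + b \<ge> 2\<close>. Conversely, labelling the vertices
\<open>0, 3, 6, \<dots>\<close> of each cycle with \<open>2\<close> and all others with \<open>-1\<close> gives weight \<open>1\<close> on each side
when the length is \<open>2 mod 3\<close>, and every window has nonnegative weight.\<close>

lemma closed_nbhd_join_Inl:
  "closed_nbhd (join_verts V1 V2) (join_adj E1 E2) (Inl x) = Inl ` closed_nbhd V1 E1 x \<union> Inr ` V2"
  unfolding closed_nbhd_def join_verts_def by (auto elim: join_adj.elims)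

lemma closed_nbhd_join_Inr:
  "closed_nbhd (join_verts V1 V2) (join_adj E1 E2) (Inr x) = Inr ` closed_nbhd V2 E2 x \<union> Inl ` V1"
  unfolding closed_nbhd_def join_verts_def by (auto elim: join_adj.elims)

lemma finite_closed_nbhd: "finite V \<Longrightarrow> finite (closed_nbhd V E x)"
  unfolding closed_nbhd_def by simp

lemma sum_closed_nbhd_join_Inl:
  assumes "finite V1" "finite V2"
  shows "(\<Sum>y\<in>closed_nbhd (join_verts V1 V2) (join_adj E1 E2) (Inl x). f y)
       = (\<Sum>y\<in>closed_nbhd V1 E1 x. f (Inl y)) + (\<Sum>y\<in>V2. f (Inr y))"
  unfolding closed_nbhd_join_Inl
  by (subst sum.union_disjoint) (auto simp: assms finite_closed_nbhd sum.reindex)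

lemma sum_closed_nbhd_join_Inr:
  assumes "finite V1" "finite V2"
  shows "(\<Sum>y\<in>closed_nbhd (join_verts V1 V2) (join_adj E1 E2) (Inr x). f y)
       = (\<Sum>y\<in>closed_nbhd V2 E2 x. f (Inr y)) + (\<Sum>y\<in>V1. f (Inl y))"
  unfolding closed_nbhd_join_Inr
  by (subst sum.union_disjoint) (auto simp: assms finite_closed_nbhd sum.reindex)

lemma weight_join:
  assumes "finite V1" "finite V2"
  shows "weight (join_verts V1 V2) f = weight V1 (f \<circ> Inl) + weight V2 (f \<circ> Inr)"
  unfolding weight_def join_verts_def by (rule sum.Plus[OF assms])

lemma gamma_sR_eqI:
  assumes "finite V" and "is_SRDF V E f" and "weight V f = w"
    and "\<And>g. is_SRDF V E g \<Longrightarrow> w \<le> weight V g"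
  shows "gamma_sR V E = w"
proof -
  have "weight V g \<le> 2 * int (card V)" if "is_SRDF V E g" for g
  proof -
    have "weight V g \<le> (\<Sum>x\<in>V. 2)"
      unfolding weight_def using that by (intro sum_mono) (auto simp: is_SRDF_def)
    then show ?thesis by simp
  qed
  then have "{weight V g | g. is_SRDF V E g} \<subseteq> {w .. 2 * int (card V)}"
    using assms(4) by auto
  then show ?thesis
    unfolding gamma_sR_def using assms(2,3) by (intro Min_eqI) (auto intro: finite_subset)
qed

lemma succ_mod_eq:
  fixes x m :: nat
  shows "x < m \<Longrightarrow> (x + 1) mod m = (if x + 1 = m then 0 else x + 1)"
  by simp

lemma pred_mod_eq:
  fixes x m :: nat
  shows "x < m \<Longrightarrow> (x + (m - 1)) mod m = (if x = 0 then m - 1 else x - 1)"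
  by (simp add: mod_if)

lemma eq_succ_mod_iff_pred_mod:
  fixes x y m :: nat
  assumes "x < m" "y < m"
  shows "x = (y + 1) mod m \<longleftrightarrow> y = (x + (m - 1)) mod m"
  using assms unfolding pred_mod_eq[OF assms(1)] by (auto simp: mod_Suc)

lemma closed_nbhd_cycle:
  assumes "x < m"
  shows "closed_nbhd {0..<m} (cycle_adj m) x = {x, (x + 1) mod m, (x + (m - 1)) mod m}"
  using assms eq_succ_mod_iff_pred_mod[OF assms] unfolding closed_nbhd_def cycle_adj_def
  by auto

lemma cycle_neighbours_distinct:
  fixes x m :: nat
  assumes "x < m" "3 \<le> m"
  shows "(x + 1) mod m \<noteq> x" and "(x + (m - 1)) mod m \<noteq> x"
    and "(x + 1) mod m \<noteq> (x + (m - 1)) mod m"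
  using assms unfolding succ_mod_eq[OF assms(1)] pred_mod_eq[OF assms(1)] by auto

lemma sum_closed_nbhd_cycle:
  assumes "x < m" "3 \<le> m"
  shows "(\<Sum>y\<in>closed_nbhd {0..<m} (cycle_adj m) x. g y)
       = g x + g ((x + 1) mod m) + g ((x + (m - 1)) mod m)"
  using cycle_neighbours_distinct[OF assms]
  by (simp add: closed_nbhd_cycle[OF assms(1)] add.assoc)

lemma sum_rotate:
  fixes g :: "nat \<Rightarrow> 'a::comm_monoid_add"
  shows "(\<Sum>x<m. g ((x + k) mod m)) = (\<Sum>x<m. g x)"
proof -
  have inj: "inj_on (\<lambda>x. (x + k) mod m) {..<m}"
  proof (rule inj_onI)
    fix x y assume "x \<in> {..<m}" "y \<in> {..<m}" "(x + k) mod m = (y + k) mod m"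
    then have "(int x + int k) mod int m = (int y + int k) mod int m"
      by (metis of_nat_add zmod_int)
    then have "(int x + int k - int k) mod int m = (int y + int k - int k) mod int m"
      by (metis mod_diff_left_eq)
    with \<open>x \<in> {..<m}\<close> \<open>y \<in> {..<m}\<close> show "x = y"
      by (simp add: zmod_int[symmetric])
  qed
  then have "(\<lambda>x. (x + k) mod m) ` {..<m} = {..<m}"
    by (intro endo_inj_surj) auto
  with inj show ?thesis
    using sum.reindex[OF inj, of g] by (simp add: comp_def)
qed

lemma sum_sum_closed_nbhd_cycle:
  fixes g :: "nat \<Rightarrow> 'a::comm_semiring_1"
  assumes "3 \<le> m"
  shows "(\<Sum>x<m. \<Sum>y\<in>closed_nbhd {0..<m} (cycle_adj m) x. g y) = 3 * (\<Sum>x<m. g x)"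
proof -
  have "(\<Sum>x<m. \<Sum>y\<in>closed_nbhd {0..<m} (cycle_adj m) x. g y)
      = (\<Sum>x<m. g x) + (\<Sum>x<m. g ((x + 1) mod m)) + (\<Sum>x<m. g ((x + (m - 1)) mod m))"
    using assms by (simp add: sum_closed_nbhd_cycle sum.distrib)
  also have "\<dots> = 3 * (\<Sum>x<m. g x)"
    unfolding sum_rotate using distrib_right[of 1 2 "\<Sum>x<m. g x"]
    by (simp add: mult_2 add.assoc)
  finally show ?thesis .
qed

lemma cycle_closed_nbhd_sums_bound:
  fixes g :: "nat \<Rightarrow> int"
  assumes "3 \<le> m" and "\<And>x. x < m \<Longrightarrow> 1 \<le> (\<Sum>y\<in>closed_nbhd {0..<m} (cycle_adj m) x. g y) + c"
  shows "int m \<le> 3 * (\<Sum>x<m. g x) + int m * c"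
proof -
  have "int m = (\<Sum>x<m. 1)" by simp
  also have "\<dots> \<le> (\<Sum>x<m. (\<Sum>y\<in>closed_nbhd {0..<m} (cycle_adj m) x. g y) + c)"
    using assms(2) by (intro sum_mono) simp
  also have "\<dots> = 3 * (\<Sum>x<m. g x) + int m * c"
    using assms(1) by (simp add: sum.distrib sum_sum_closed_nbhd_cycle)
  finally show ?thesis .
qed

lemma two_le_add_if_cross_bounds:
  fixes a b :: int
  assumes "int m \<le> 3 * a + int m * b" "int n \<le> 3 * b + int n * a" "4 \<le> m" "4 \<le> n"
  shows "2 \<le> a + b"
proof (rule ccontr)
  assume "\<not> 2 \<le> a + b"
  then consider "b \<le> 0" "a \<le> 1 - b" | "a \<le> 0" "b \<le> 1 - a" by linarith
  then show False
  proof cases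
    case 1
    then have "4 * (1 - b) \<le> int m * (1 - b)" using assms(3) by (intro mult_right_mono) auto
    then show False using assms(1) 1 by (simp add: algebra_simps)
  next
    case 2
    then have "4 * (1 - a) \<le> int n * (1 - a)" using assms(4) by (intro mult_right_mono) auto
    then show False using assms(2) 2 by (simp add: algebra_simps)
  qed
qed

lemma SRDF_join_cycles_weight_ge:
  assumes "is_SRDF (join_verts {0..<m} {0..<n}) (join_adj (cycle_adj m) (cycle_adj n)) f"
    and "4 \<le> m" "4 \<le> n"
  shows "2 \<le> weight (join_verts {0..<m} {0..<n}) f"
proof -
  define a where "a = (\<Sum>x<m. f (Inl x))"
  define b where "b = (\<Sum>y<n. f (Inr y))"
  have nbhd: "1 \<le> (\<Sum>y\<in>closed_nbhd (join_verts {0..<m} {0..<n})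
                                        (join_adj (cycle_adj m) (cycle_adj n)) v. f y)"
    if "v \<in> join_verts {0..<m} {0..<n}" for v
    using assms(1) that by (auto simp: is_SRDF_def)
  have "int m \<le> 3 * a + int m * b"
    unfolding a_def b_def using assms(2)
  proof (intro cycle_closed_nbhd_sums_bound)
    fix x assume "x < m"
    then have "Inl x \<in> join_verts {0..<m} {0..<n}" by (auto simp: join_verts_def)
    from nbhd[OF this]
    show "1 \<le> (\<Sum>y\<in>closed_nbhd {0..<m} (cycle_adj m) x. f (Inl y)) + (\<Sum>y<n. f (Inr y))"
      by (simp add: sum_closed_nbhd_join_Inl atLeast0LessThan)
  qed simp
  moreover have "int n \<le> 3 * b + int n * a"
    unfolding a_def b_def using assms(3)
  proof (intro cycle_closed_nbhd_sums_bound)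
    fix y assume "y < n"
    then have "Inr y \<in> join_verts {0..<m} {0..<n}" by (auto simp: join_verts_def)
    from nbhd[OF this]
    show "1 \<le> (\<Sum>x\<in>closed_nbhd {0..<n} (cycle_adj n) y. f (Inr x)) + (\<Sum>x<m. f (Inl x))"
      by (simp add: sum_closed_nbhd_join_Inr atLeast0LessThan)
  qed simp
  ultimately have "2 \<le> a + b"
    using assms(2,3) by (rule two_le_add_if_cross_bounds)
  then show ?thesis
    unfolding weight_join[OF finite_atLeastLessThan finite_atLeastLessThan]
    by (simp add: weight_def a_def b_def atLeast0LessThan)
qed

definition every_third_two :: "nat \<Rightarrow> int" where
  "every_third_two i = (if 3 dvd i then 2 else -1)"

lemma sum_every_third_two:
  assumes "k mod 3 = 2"
  shows "(\<Sum>i<k. every_third_two i) = 1"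
proof -
  have "(\<Sum>i<3 * q + 2. every_third_two i) = 1" for q
  proof (induction q)
    case 0
    then show ?case by (simp add: every_third_two_def numeral_2_eq_2)
  next
    case (Suc q)
    have "3 * Suc q + 2 = Suc (Suc (Suc (3 * q + 2)))" by simp
    moreover have "\<not> 3 dvd 3 * q + 2" "3 dvd Suc (3 * q + 2)" "\<not> 3 dvd Suc (Suc (3 * q + 2))"
      by presburger+
    ultimately show ?case
      by (simp only: sum.lessThan_Suc Suc.IH) (simp add: every_third_two_def)
  qed
  moreover have "k = 3 * (k div 3) + 2" using assms by presburger
  ultimately show ?thesis by metis
qed

lemma sum_closed_nbhd_every_third_two_nonneg:
  assumes "x < k" "3 \<le> k"
  shows "0 \<le> (\<Sum>y\<in>closed_nbhd {0..<k} (cycle_adj k) x. every_third_two y)"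
proof -
  have "3 dvd x \<or> 3 dvd (x + 1) mod k \<or> 3 dvd (x + (k - 1)) mod k"
    using assms unfolding succ_mod_eq[OF assms(1)] pred_mod_eq[OF assms(1)] by presburger
  moreover have "-1 \<le> every_third_two i" for i by (simp add: every_third_two_def)
  ultimately show ?thesis
    unfolding sum_closed_nbhd_cycle[OF assms] by (auto simp: every_third_two_def)
qed

lemma every_third_two_join_cycles_SRDF:
  assumes "3 \<le> m" "3 \<le> n" "m mod 3 = 2" "n mod 3 = 2"
  shows "is_SRDF (join_verts {0..<m} {0..<n}) (join_adj (cycle_adj m) (cycle_adj n))
                 (case_sum every_third_two every_third_two)"
  unfolding is_SRDF_def
proof (intro conjI ballI impI)
  let ?f = "case_sum every_third_two every_third_two"
  fix v assume v: "v \<in> join_verts {0..<m} {0..<n}"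
  show "?f v \<in> {-1, 1, 2}" by (cases v) (auto simp: every_third_two_def)
  show "1 \<le> (\<Sum>y\<in>closed_nbhd (join_verts {0..<m} {0..<n})
                                  (join_adj (cycle_adj m) (cycle_adj n)) v. ?f y)"
  proof (cases v)
    case (Inl x)
    with v have "x < m" by (auto simp: join_verts_def)
    with \<open>v = Inl x\<close> assms show ?thesis
      using sum_every_third_two sum_closed_nbhd_every_third_two_nonneg[of x m]
      by (simp add: sum_closed_nbhd_join_Inl atLeast0LessThan)
  next
    case (Inr y)
    with v have "y < n" by (auto simp: join_verts_def)
    with \<open>v = Inr y\<close> assms show ?thesis
      using sum_every_third_two sum_closed_nbhd_every_third_two_nonneg[of y n]
      by (simp add: sum_closed_nbhd_join_Inr atLeast0LessThan)
  qed
  show "\<exists>u\<in>join_verts {0..<m} {0..<n}. join_adj (cycle_adj m) (cycle_adj n) v u \<and> ?f u = 2"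
  proof (cases v)
    case (Inl x)
    then show ?thesis
      using assms by (intro bexI[of _ "Inr 0"]) (auto simp: every_third_two_def join_verts_def)
  next
    case (Inr y)
    then show ?thesis
      using assms by (intro bexI[of _ "Inl 0"]) (auto simp: every_third_two_def join_verts_def)
  qed
qed

lemma weight_every_third_two_join_cycles:
  assumes "m mod 3 = 2" "n mod 3 = 2"
  shows "weight (join_verts {0..<m} {0..<n}) (case_sum every_third_two every_third_two) = 2"
  unfolding weight_join[OF finite_atLeastLessThan finite_atLeastLessThan]
  using sum_every_third_two[OF assms(1)] sum_every_third_two[OF assms(2)]
  by (simp add: weight_def atLeast0LessThan)

theorem mainTheorem8:
  fixes m n :: nat
  assumes "m \<ge> 13" and "n \<ge> 13" and "m mod 3 = 2" and "n mod 3 = 2"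
  shows "gamma_sR (join_verts {0..<m} {0..<n}) (join_adj (cycle_adj m) (cycle_adj n)) = 2"
proof (rule gamma_sR_eqI)
  show "finite (join_verts {0..<m} {0..<n})" by (simp add: join_verts_def)
  show "is_SRDF (join_verts {0..<m} {0..<n}) (join_adj (cycle_adj m) (cycle_adj n))
                (case_sum every_third_two every_third_two)"
    using assms by (intro every_third_two_join_cycles_SRDF) auto
  show "weight (join_verts {0..<m} {0..<n}) (case_sum every_third_two every_third_two) = 2"
    using assms(3,4) by (rule weight_every_third_two_join_cycles)
  show "2 \<le> weight (join_verts {0..<m} {0..<n}) g"
    if "is_SRDF (join_verts {0..<m} {0..<n}) (join_adj (cycle_adj m) (cycle_adj n)) g" for g
    using that assms by (intro SRDF_join_cycles_weight_ge) auto
qed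

end
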